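(* Let $\mathrm{G}$ be a complex semisimple Lie group and $\mathrm{G}_0$ a real form with compatible Iwasawa factorizations. Then the restriction to $\mathfrak{g}_0$ of the Toda vector field on $\mathfrak{g}$ equals the Toda vector field on $\mathfrak{g}_0$ defined by the Iwasawa factorization $\mathrm{G}_0=\mathrm{K}_0\mathrm{A}_0\mathrm{N}_0$.
   Context: $\mathrm{G}$ is a connected complex semisimple Lie group with Lie algebra $\mathfrak{g}$, with an anti-holomorphic Cartan involution $\theta$ (fixed points the maximal compact $\mathrm{K}$, $\mathfrak{g}=\mathfrak{k}\oplus\mathfrak{p}$), a maximal abelian $\mathfrak{a}\subset\mathfrak{p}$ and a root ordering of $(\mathfrak{g},\mathfrak{a})$; $\mathfrak{n}$ is the sum of positive root spaces, $\mathfrak{u}=\mathfrak{a}\oplus\mathfrak{n}$, $\mathfrak{h}=i\mathfrak{a}\oplus\mathfrak{a}$. The Toda vector field on $\mathfrak{g}$ is $X'=[X,\pi_{\mathfrak{k}}X]$, $\pi_{\mathfrak{k}}$ the projection along $\mathfrak{u}$. A real form $\mathrm{G}_0$ is the fixed-point set of an anti-holomorphic involution $\tau$ of $\mathrm{G}$. Compatibility means: (c) $\tau\theta=\theta\tau$; (d) $\mathfrak{h}$ is $\tau$-invariant with fixed-point set $\mathfrak{h}_0$ a maximally non-compact Cartan subalgebra of $\mathfrak{g}_0$, i.e. $\mathfrak{a}_0=\mathfrak{a}^\tau$ is maximal abelian in $\mathfrak{p}_0=\mathfrak{p}^\tau$; (e) roots of $(\mathfrak{g},\mathfrak{a})$ agreeing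 on $\mathfrak{a}_0$ have the same sign. Then $\theta$ restricts to $\mathrm{G}_0$, $\mathfrak{g}_0=\mathfrak{k}_0\oplus\mathfrak{p}_0$ with $\mathfrak{k}_0=\mathfrak{k}\cap\mathfrak{g}_0$, the restricted roots of $(\mathfrak{g}_0,\mathfrak{a}_0)$ are ordered by declaring positive those that are restrictions of positive roots, $\mathfrak{n}_0$ is the sum of positive restricted root spaces, $\mathrm{K}_0$ is the fixed-point set of $\theta$ in $\mathrm{G}_0$, $\mathrm{A}_0,\mathrm{N}_0$ the connected subgroups integrating $\mathfrak{a}_0,\mathfrak{n}_0$, and $\mathrm{G}_0=\mathrm{K}_0\mathrm{A}_0\mathrm{N}_0$. The Toda vector field on $\mathfrak{g}_0$ is $X'=[X,\pi_{\mathfrak{k}_0}X]$, $\pi_{\mathfrak{k}_0}$ the projection onto $\mathfrak{k}_0$ along $\mathfrak{u}_0=\mathfrak{a}_0\oplus\mathfrak{n}_0$. *)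

theory Defs
  imports "HOL-Analysis.Analysis"
begin

text \<open>
  Model: the complex semisimple Lie algebra g is the complex vector space complex^'n
  (finite dimensional, dimension CARD('n)) equipped with a Lie bracket br.
  Complex scalar multiplication is (*s); real subspaces are the usual subspace / span
  (complex^'n is a real vector space), complex subspaces are vec.subspace / vec.span.
\<close>

type_synonym 'n cvec = "complex ^ 'n"

definition lie_bracket :: "('n::finite cvec \<Rightarrow> 'n cvec \<Rightarrow> 'n cvec) \<Rightarrow> bool" where
  "lie_bracket br \<longleftrightarrow>
     (\<forall>a x y z. br (a *s x + y) z = a *s br x z + br y z) \<and>
     (\<forall>a x y z. br z (a *s x + y) = a *s br z x + br z y) \<and>
     (\<forall>x. br x x = 0) \<and>
     (\<forall>x y z. br x (br y z) + br y (br z x) + br z (br x y) = 0)"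

definition lie_ideal :: "('n::finite cvec \<Rightarrow> 'n cvec \<Rightarrow> 'n cvec) \<Rightarrow> 'n cvec set \<Rightarrow> bool" where
  "lie_ideal br I \<longleftrightarrow> vec.subspace I \<and> (\<forall>x y. y \<in> I \<longrightarrow> br x y \<in> I)"

fun derived_series :: "('n::finite cvec \<Rightarrow> 'n cvec \<Rightarrow> 'n cvec) \<Rightarrow> 'n cvec set \<Rightarrow> nat \<Rightarrow> 'n cvec set" where
  "derived_series br I 0 = I"
| "derived_series br I (Suc k) =
     vec.span {br x y | x y. x \<in> derived_series br I k \<and> y \<in> derived_series br I k}"

definition solvable_ideal :: "('n::finite cvec \<Rightarrow> 'n cvec \<Rightarrow> 'n cvec) \<Rightarrow> 'n cvec set \<Rightarrow> bool" where
  "solvable_ideal br I \<longleftrightarrow> (\<exists>k. derived_series br I k = {0})"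

definition semisimple :: "('n::finite cvec \<Rightarrow> 'n cvec \<Rightarrow> 'n cvec) \<Rightarrow> bool" where
  "semisimple br \<longleftrightarrow> lie_bracket br \<and>
     (\<forall>I. lie_ideal br I \<and> solvable_ideal br I \<longrightarrow> I = {0})"

definition ad_mat :: "('n::finite cvec \<Rightarrow> 'n cvec \<Rightarrow> 'n cvec) \<Rightarrow> 'n cvec \<Rightarrow> complex ^ 'n ^ 'n" where
  "ad_mat br x = (\<chi> i j. br x (axis j 1) $ i)"

definition killing :: "('n::finite cvec \<Rightarrow> 'n cvec \<Rightarrow> 'n cvec) \<Rightarrow> 'n cvec \<Rightarrow> 'n cvec \<Rightarrow> complex" where
  "killing br x y = (\<Sum>i\<in>UNIV. (ad_mat br x ** ad_mat br y) $ i $ i)"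

definition antiholo_invol :: "('n::finite cvec \<Rightarrow> 'n cvec \<Rightarrow> 'n cvec) \<Rightarrow> ('n cvec \<Rightarrow> 'n cvec) \<Rightarrow> bool" where
  "antiholo_invol br s \<longleftrightarrow>
     (\<forall>a x y. s (a *s x + y) = cnj a *s s x + s y) \<and>
     (\<forall>x y. s (br x y) = br (s x) (s y)) \<and>
     (\<forall>x. s (s x) = x)"

text \<open>Cartan involution of the underlying real Lie algebra g_R: its Killing form is 2 Re B,
  and B_{g_R}(X, theta X) must be negative definite.\<close>

definition cartan_involution :: "('n::finite cvec \<Rightarrow> 'n cvec \<Rightarrow> 'n cvec) \<Rightarrow> ('n cvec \<Rightarrow> 'n cvec) \<Rightarrow> bool" where
  "cartan_involution br th \<longleftrightarrow> antiholo_invol br th \<and>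
     (\<forall>x. x \<noteq> 0 \<longrightarrow> Re (killing br x (th x)) < 0)"

definition fixed_set :: "('n::finite cvec \<Rightarrow> 'n cvec) \<Rightarrow> 'n cvec set" where
  "fixed_set s = {x. s x = x}"

definition minus_set :: "('n::finite cvec \<Rightarrow> 'n cvec) \<Rightarrow> 'n cvec set" where
  "minus_set s = {x. s x = - x}"

definition abelian :: "('n::finite cvec \<Rightarrow> 'n cvec \<Rightarrow> 'n cvec) \<Rightarrow> 'n cvec set \<Rightarrow> bool" where
  "abelian br A \<longleftrightarrow> (\<forall>x\<in>A. \<forall>y\<in>A. br x y = 0)"

definition max_abelian_in :: "('n::finite cvec \<Rightarrow> 'n cvec \<Rightarrow> 'n cvec) \<Rightarrow> 'n cvec set \<Rightarrow> 'n cvec set \<Rightarrow> bool" where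
  "max_abelian_in br A P \<longleftrightarrow> subspace A \<and> A \<subseteq> P \<and> abelian br A \<and>
     (\<forall>B. subspace B \<and> A \<subseteq> B \<and> B \<subseteq> P \<and> abelian br B \<longrightarrow> B = A)"

text \<open>A root is a real functional on A, represented as a function
  that vanishes outside A (so that roots are determined by their values on A).\<close>

definition root_space :: "('n::finite cvec \<Rightarrow> 'n cvec \<Rightarrow> 'n cvec) \<Rightarrow> 'n cvec set \<Rightarrow> 'n cvec set \<Rightarrow> ('n cvec \<Rightarrow> real) \<Rightarrow> 'n cvec set" where
  "root_space br L A \<alpha> = {X \<in> L. \<forall>H\<in>A. br H X = complex_of_real (\<alpha> H) *s X}"

definition roots :: "('n::finite cvec \<Rightarrow> 'n cvec \<Rightarrow> 'n cvec) \<Rightarrow> 'n cvec set \<Rightarrow> 'n cvec set \<Rightarrow> ('n cvec \<Rightarrow> real) set" where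
  "roots br L A = {\<alpha>. (\<forall>x. x \<notin> A \<longrightarrow> \<alpha> x = 0) \<and> (\<exists>H\<in>A. \<alpha> H \<noteq> 0) \<and>
                       root_space br L A \<alpha> \<noteq> {0}}"

definition root_ordering :: "('n::finite cvec \<Rightarrow> 'n cvec \<Rightarrow> 'n cvec) \<Rightarrow> 'n cvec set \<Rightarrow> ('n cvec \<Rightarrow> real) set \<Rightarrow> bool" where
  "root_ordering br A Pos \<longleftrightarrow> (\<exists>H0\<in>A. (\<forall>\<alpha>\<in>roots br UNIV A. \<alpha> H0 \<noteq> 0) \<and>
       Pos = {\<alpha>\<in>roots br UNIV A. \<alpha> H0 > 0})"

definition nilp :: "('n::finite cvec \<Rightarrow> 'n cvec \<Rightarrow> 'n cvec) \<Rightarrow> 'n cvec set \<Rightarrow> 'n cvec set \<Rightarrow> ('n cvec \<Rightarrow> real) set \<Rightarrow> 'n cvec set" where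
  "nilp br L A Pos = span (\<Union>\<alpha>\<in>Pos. root_space br L A \<alpha>)"

definition set_sum :: "'n::finite cvec set \<Rightarrow> 'n cvec set \<Rightarrow> 'n cvec set" where
  "set_sum A B = {a + b | a b. a \<in> A \<and> b \<in> B}"

definition proj_along :: "'n::finite cvec set \<Rightarrow> 'n cvec set \<Rightarrow> 'n cvec \<Rightarrow> 'n cvec" where
  "proj_along K U X = (THE k. k \<in> K \<and> X - k \<in> U)"

definition toda :: "('n::finite cvec \<Rightarrow> 'n cvec \<Rightarrow> 'n cvec) \<Rightarrow> 'n cvec set \<Rightarrow> 'n cvec set \<Rightarrow> 'n cvec \<Rightarrow> 'n cvec" where
  "toda br K U X = br X (proj_along K U X)"

end

(* The form B_theta(X, Y) = - Re B(X, theta Y) is a positive definite inner product on g for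
   which every ad H, H in a, is self-adjoint; as a is abelian these operators commute, so g is
   spanned by common eigenvectors of ad a, and sorting them by the sign of their weight gives
   g = k + a + n.  Since a + n is B_theta-orthogonal to theta n and a is orthogonal to n, the
   only theta-fixed vector in a + n is 0, so the k-component k of X is unique; the same
   argument works in g_0 for a_0 and the restricted positive roots.
   Compatibility makes tau preserve a and n.  For tau-fixed X, uniqueness gives tau k = k;
   writing X - k = h + m with h in a and m in n, the difference tau h - h = m - tau m lies in
   the intersection of a and n, which is 0; so h is in a_0 and m = (m + tau m)/2 lies in n_0.
   Thus k is also the k_0-component of X, and both Toda fields equal [X, k]. *)

theory Submission
  imports Defs
begin

lemma linear_coeff_zero_if_quadratic_nonpos:
  fixes c d :: real
  assumes "\<And>t. t * c + t\<^sup>2 * d \<le> 0"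
  shows "c = 0"
proof (rule ccontr)
  assume "c \<noteq> 0"
  define e where "e = \<bar>d\<bar> + 1"
  have "e > 0" "e + d > 0" unfolding e_def by linarith+
  have "(c / e) * c + (c / e)\<^sup>2 * d = c\<^sup>2 * (e + d) / e\<^sup>2"
    using \<open>e > 0\<close> by (simp add: field_simps power2_eq_square)
  also have "\<dots> > 0"
    using \<open>c \<noteq> 0\<close> \<open>e > 0\<close> \<open>e + d > 0\<close> by simp
  finally show False using assms[of "c / e"] by linarith
qed

locale pos_def_form =
  fixes P :: "'a::euclidean_space \<Rightarrow> 'a \<Rightarrow> real"
  assumes bilinear: "bilinear P"
    and pos: "x \<noteq> 0 \<Longrightarrow> P x x > 0"
begin

lemma linear_left: "linear (\<lambda>x. P x y)"
  using bilinear unfolding bilinear_def by blast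

lemma linear_right: "linear (P x)"
  using bilinear unfolding bilinear_def by blast

lemma self_eq_0_iff: "P x x = 0 \<longleftrightarrow> x = 0"
  using pos[of x] bilinear_lzero[OF bilinear] by force

text \<open>Write P s y as the inner product of y with R s for a linear R, and apply the Euclidean
  version to the proper subspace R ` span S.\<close>

lemma form_orthogonal_to_subspace_exists:
  assumes "span S \<noteq> UNIV"
  obtains y where "y \<noteq> 0" "\<And>s. s \<in> span S \<Longrightarrow> P s y = 0"
proof -
  define R where "R s = (\<Sum>b\<in>Basis. P s b *\<^sub>R b)" for s
  have R: "y \<bullet> R s = P s y" for s y
  proof -
    have "y \<bullet> R s = (\<Sum>b\<in>Basis. (y \<bullet> b) * P s b)"
      by (simp add: R_def inner_sum_right mult.commute)
    also have "\<dots> = P s (\<Sum>b\<in>Basis. (y \<bullet> b) *\<^sub>R b)"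
      by (simp add: linear_sum[OF linear_right] linear_scale[OF linear_right])
    finally show ?thesis by (simp add: euclidean_representation)
  qed
  have "linear R"
    unfolding R_def
    by (rule linear_compose_sum)
      (auto intro: linear_compose[OF linear_left linear_scaleR_left, unfolded o_def])
  then have "dim (R ` span S) \<le> dim (span S)" by (rule dim_image_le)
  also have "\<dots> < DIM('a)"
    using assms dim_eq_full[of S] dim_subset_UNIV[of S] by (simp add: le_less)
  finally obtain y where "y \<noteq> 0" "\<And>z. z \<in> span (R ` span S) \<Longrightarrow> orthogonal y z"
    using Linear_Algebra.orthogonal_to_subspace_exists by blast
  then show ?thesis
    using that R unfolding orthogonal_def by (metis imageI span_base)
qed

lemmas bilinear_simps =
  bilinear_ladd[OF bilinear] bilinear_radd[OF bilinear] bilinear_lsub[OF bilinear]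
  bilinear_rsub[OF bilinear] bilinear_lmul[OF bilinear] bilinear_rmul[OF bilinear]

lemma rayleigh_quotient_max_exists:
  assumes W: "subspace W" "W \<noteq> {0}" and T: "linear T"
  obtains x M where "x \<in> W" "x \<noteq> 0" "P (T x) x = M * P x x"
    "\<And>w. w \<in> W \<Longrightarrow> P (T w) w \<le> M * P w w"
proof -
  define S where "S = sphere 0 1 \<inter> W"
  define f where "f w = P (T w) w / P w w" for w
  have "compact S"
    unfolding S_def using closed_subspace[OF W(1)] by (simp add: compact_Int_closed)
  obtain w0 where "w0 \<in> W" "w0 \<noteq> 0" using W subspace_0 by blast
  then have "(1 / norm w0) *\<^sub>R w0 \<in> S" unfolding S_def using W by (simp add: subspace_scale)
  then have "S \<noteq> {}" by blast
  have "continuous_on S T"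
    using T by (simp add: linear_continuous_on linear_conv_bounded_linear)
  then have "continuous_on S f"
    unfolding f_def S_def using pos
    by (intro continuous_on_divide bilinear_continuous_on_compose[OF _ _ bilinear]
        continuous_on_id) (auto simp: self_eq_0_iff)
  then obtain x where x: "x \<in> S" and x_max: "\<And>y. y \<in> S \<Longrightarrow> f y \<le> f x"
    using continuous_attains_sup[OF \<open>compact S\<close> \<open>S \<noteq> {}\<close>] by blast
  have "x \<in> W" "x \<noteq> 0" using x unfolding S_def by auto
  moreover have "P (T x) x = f x * P x x"
    unfolding f_def using pos[OF \<open>x \<noteq> 0\<close>] by simp
  moreover have "P (T w) w \<le> f x * P w w" if "w \<in> W" for w
  proof (cases "w = 0")
    case True
    then show ?thesis using T by (simp add: linear_0 bilinear_lzero[OF bilinear])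
  next
    case False
    have "(1 / norm w) *\<^sub>R w \<in> S" unfolding S_def using False \<open>w \<in> W\<close> W by (simp add: subspace_scale)
    moreover have "f ((1 / norm w) *\<^sub>R w) = f w"
      unfolding f_def using False by (simp add: linear_scale[OF T] bilinear_simps)
    ultimately have "f w \<le> f x" using x_max by metis
    then show ?thesis unfolding f_def using pos[OF False] by (simp add: divide_le_eq)
  qed
  ultimately show ?thesis using that by blast
qed

text \<open>First-order condition at a maximum of the Rayleigh quotient: along the line
  x + t y with y = T x - M x the quadratic form P (T w) w - M P w w is nonpositive
  and vanishes at t = 0, so its linear coefficient 2 P y y vanishes.\<close>

lemma rayleigh_quotient_max_eigenvector:
  assumes W: "subspace W" "\<And>w. w \<in> W \<Longrightarrow> T w \<in> W" and T: "linear T"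
    and selfadjoint: "\<And>x y. P (T x) y = P x (T y)"
    and x: "x \<in> W" "P (T x) x = M * P x x"
    and max: "\<And>w. w \<in> W \<Longrightarrow> P (T w) w \<le> M * P w w"
  shows "T x = M *\<^sub>R x"
proof -
  define y where "y = T x - M *\<^sub>R x"
  have "y \<in> W" unfolding y_def using W x by (simp add: subspace_diff subspace_scale)
  have Tx: "T x = y + M *\<^sub>R x" unfolding y_def by simp
  have "P (T x) y = P y y + M * P x y" "P (T y) x = P y y + M * P y x"
    by (simp_all add: selfadjoint[of y x] Tx bilinear_simps)
  then have expand: "P (T x + t *\<^sub>R T y) (x + t *\<^sub>R y) - M * P (x + t *\<^sub>R y) (x + t *\<^sub>R y)
      = t * (2 * P y y) + t\<^sup>2 * (P (T y) y - M * P y y)" for t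
    using x(2) by (simp add: bilinear_simps power2_eq_square algebra_simps)
  have "t * (2 * P y y) + t\<^sup>2 * (P (T y) y - M * P y y) \<le> 0" for t
  proof -
    have "x + t *\<^sub>R y \<in> W" using W x \<open>y \<in> W\<close> by (simp add: subspace_add subspace_scale)
    from max[OF this] show ?thesis
      by (simp add: linear_add[OF T] linear_scale[OF T] flip: expand)
  qed
  then have "2 * P y y = 0" by (rule linear_coeff_zero_if_quadratic_nonpos)
  then show ?thesis unfolding y_def using self_eq_0_iff by simp
qed

lemma selfadjoint_eigenvector_exists:
  assumes "subspace W" "W \<noteq> {0}" "\<And>w. w \<in> W \<Longrightarrow> T w \<in> W" "linear T"
    and "\<And>x y. P (T x) y = P x (T y)"
  obtains x l where "x \<in> W" "x \<noteq> 0" "T x = l *\<^sub>R x"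
  using rayleigh_quotient_max_exists[OF assms(1,2,4)] rayleigh_quotient_max_eigenvector[OF assms(1,3-5)]
  by metis

end

locale commuting_selfadjoint_family = pos_def_form P
  for P :: "'a::euclidean_space \<Rightarrow> 'a \<Rightarrow> real" +
  fixes I :: "'i set" and T :: "'i \<Rightarrow> 'a \<Rightarrow> 'a"
  assumes linear_T: "i \<in> I \<Longrightarrow> linear (T i)"
    and selfadjoint: "i \<in> I \<Longrightarrow> P (T i x) y = P x (T i y)"
    and commute: "i \<in> I \<Longrightarrow> j \<in> I \<Longrightarrow> T i (T j x) = T j (T i x)"
begin

definition invariant :: "'a set \<Rightarrow> bool" where
  "invariant W \<longleftrightarrow> (\<forall>i\<in>I. \<forall>w\<in>W. T i w \<in> W)"

definition common_eigenvectors :: "'a set" where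
  "common_eigenvectors = {x. \<forall>i\<in>I. \<exists>l. T i x = l *\<^sub>R x}"

text \<open>A nonzero invariant subspace of least dimension consists of common eigenvectors:
  each eigenspace of T i inside it is again invariant, because the T j commute with T i.\<close>

lemma common_eigenvector_exists:
  assumes "subspace W" "W \<noteq> {0}" "invariant W"
  obtains x where "x \<in> W" "x \<noteq> 0" "x \<in> common_eigenvectors"
proof -
  define Q where "Q V \<longleftrightarrow> subspace V \<and> V \<subseteq> W \<and> V \<noteq> {0} \<and> invariant V" for V
  have "Q W" unfolding Q_def using assms by blast
  then obtain V where "Q V" and V_min: "\<And>V'. Q V' \<Longrightarrow> dim V \<le> dim V'"
    using ex_has_least_nat[of Q W dim] by blast
  then have V: "subspace V" "V \<subseteq> W" "V \<noteq> {0}" "invariant V"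
    unfolding Q_def by blast+
  obtain x0 where "x0 \<in> V" "x0 \<noteq> 0" using V(1,3) subspace_0 by blast
  have "\<exists>l. T i x0 = l *\<^sub>R x0" if i: "i \<in> I" for i
  proof -
    obtain x l where "x \<in> V" "x \<noteq> 0" "T i x = l *\<^sub>R x"
      using selfadjoint_eigenvector_exists[OF V(1,3) _ linear_T selfadjoint] V(4) i
      unfolding invariant_def by blast
    define V' where "V' = {v \<in> V. T i v = l *\<^sub>R v}"
    have "subspace V'"
      unfolding V'_def subspace_def using V(1) linear_T[OF i]
      by (simp add: subspace_0 subspace_add subspace_scale linear_0 linear_add linear_scale
          scaleR_add_right)
    moreover have "invariant V'"
      unfolding invariant_def
    proof (intro ballI)
      fix j v assume "j \<in> I" "v \<in> V'"
      then have "T j v \<in> V" using V(4) unfolding invariant_def V'_def by blast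
      moreover have "T i (T j v) = l *\<^sub>R T j v"
        using \<open>v \<in> V'\<close> unfolding V'_def
        by (simp add: commute[OF i \<open>j \<in> I\<close>] linear_scale[OF linear_T[OF \<open>j \<in> I\<close>]])
      ultimately show "T j v \<in> V'" unfolding V'_def by blast
    qed
    ultimately have "Q V'"
      unfolding Q_def V'_def using V(2) \<open>x \<in> V\<close> \<open>x \<noteq> 0\<close> \<open>T i x = l *\<^sub>R x\<close> by blast
    then have "V' = V"
      using V_min[of V'] V(1) subspace_dim_equal[of V' V] unfolding Q_def V'_def by blast
    then show ?thesis using \<open>x0 \<in> V\<close> unfolding V'_def by blast
  qed
  then show ?thesis
    using that \<open>x0 \<in> V\<close> \<open>x0 \<noteq> 0\<close> V(2) unfolding common_eigenvectors_def by blast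
qed

text \<open>The P-orthogonal complement of the span of the common eigenvectors is invariant
  by self-adjointness; a common eigenvector inside it would be P-orthogonal to itself.\<close>

theorem span_common_eigenvectors: "span common_eigenvectors = UNIV"
proof (rule ccontr)
  assume "span common_eigenvectors \<noteq> UNIV"
  define C where "C = {y. \<forall>s\<in>span common_eigenvectors. P s y = 0}"
  have "subspace C"
    unfolding C_def subspace_def
    by (simp add: bilinear_radd[OF bilinear] bilinear_rmul[OF bilinear] bilinear_rzero[OF bilinear])
  moreover obtain y where "y \<noteq> 0" "\<And>s. s \<in> span common_eigenvectors \<Longrightarrow> P s y = 0"
    using form_orthogonal_to_subspace_exists[OF \<open>span common_eigenvectors \<noteq> UNIV\<close>] by metis
  then have "C \<noteq> {0}" unfolding C_def by blast
  moreover have "invariant C"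
    unfolding invariant_def
  proof (intro ballI)
    fix i y assume "i \<in> I" "y \<in> C"
    have "T i s \<in> span common_eigenvectors" if "s \<in> span common_eigenvectors" for s
    proof (rule span_induct[OF that])
      show "subspace {s. T i s \<in> span common_eigenvectors}"
        using linear_T[OF \<open>i \<in> I\<close>]
        by (simp add: subspace_def linear_0 linear_add linear_scale span_zero span_add span_scale)
      show "T i x \<in> span common_eigenvectors" if x: "x \<in> common_eigenvectors" for x
      proof -
        obtain l where "T i x = l *\<^sub>R x"
          using x \<open>i \<in> I\<close> unfolding common_eigenvectors_def by blast
        then show ?thesis using span_scale[OF span_base[OF x]] by simp
      qed
    qed
    then show "T i y \<in> C"
      using \<open>y \<in> C\<close> unfolding C_def by (simp flip: selfadjoint[OF \<open>i \<in> I\<close>])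
  qed
  ultimately obtain x where "x \<in> C" "x \<noteq> 0" "x \<in> common_eigenvectors"
    using common_eigenvector_exists by blast
  then show False
    using span_base[of x common_eigenvectors] self_eq_0_iff unfolding C_def by blast
qed

end

lemma scaleR_eq_of_real_smult: "r *\<^sub>R (x::complex^'n) = complex_of_real r *s x"
  by (simp only: vec_eq_iff vector_scaleR_component vector_smult_component)
    (simp add: scaleR_conv_of_real)

lemma matrix_diff_rdistrib: "((A::'a::comm_ring_1^'n^'m) - B) ** C = A ** C - B ** C"
  by (simp add: vec_eq_iff matrix_matrix_mult_def sum_subtractf algebra_simps)

lemma matrix_diff_ldistrib: "(A::'a::comm_ring_1^'n^'m) ** (B - C) = A ** B - A ** C"
  by (simp add: vec_eq_iff matrix_matrix_mult_def sum_subtractf algebra_simps)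

lemma vec_span_real_imag_decomp:
  fixes A :: "'n::finite cvec set"
  assumes A: "subspace A" and x_span: "x \<in> vec.span A"
  obtains h1 h2 where "h1 \<in> A" "h2 \<in> A" "x = h1 + \<i> *s h2"
proof -
  define S where "S = {h1 + \<i> *s h2 | h1 h2. h1 \<in> A \<and> h2 \<in> A}"
  have S_memI: "h1 + \<i> *s h2 \<in> S" if "h1 \<in> A" "h2 \<in> A" for h1 h2
    using that unfolding S_def by blast
  have "x + y \<in> S" if xy: "x \<in> S" "y \<in> S" for x y
  proof -
    obtain h1 h2 h1' h2' where "h1 \<in> A" "h2 \<in> A" "h1' \<in> A" "h2' \<in> A"
      and "x = h1 + \<i> *s h2" "y = h1' + \<i> *s h2'"
      using xy unfolding S_def by blast
    then show ?thesis
      using S_memI[of "h1 + h1'" "h2 + h2'"] A by (simp add: subspace_add vector_add_ldistrib algebra_simps)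
  qed
  moreover have "c *s x \<in> S" if x: "x \<in> S" for c x
  proof -
    obtain h1 h2 where "h1 \<in> A" "h2 \<in> A" "x = h1 + \<i> *s h2"
      using x unfolding S_def by blast
    moreover have "c *s (h1 + \<i> *s h2)
        = (Re c *\<^sub>R h1 - Im c *\<^sub>R h2) + \<i> *s (Re c *\<^sub>R h2 + Im c *\<^sub>R h1)"
      by (simp add: vec_eq_iff scaleR_eq_of_real_smult algebra_simps complex_eq_iff)
    moreover have "Re c *\<^sub>R h1 - Im c *\<^sub>R h2 \<in> A" "Re c *\<^sub>R h2 + Im c *\<^sub>R h1 \<in> A"
      using A \<open>h1 \<in> A\<close> \<open>h2 \<in> A\<close> by (simp_all add: subspace_add subspace_diff subspace_scale)
    ultimately show ?thesis using S_memI by metis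
  qed
  moreover have "0 \<in> S" using S_memI[of 0 0] subspace_0[OF A] by simp
  ultimately have "vec.subspace S" unfolding vec.subspace_def by blast
  moreover have "A \<subseteq> S" using S_memI[of _ 0] subspace_0[OF A] by auto
  ultimately have "x \<in> S" using vec.span_minimal x_span by blast
  then show ?thesis using that unfolding S_def by blast
qed

locale antiholo_involution =
  fixes br :: "'n::finite cvec \<Rightarrow> 'n cvec \<Rightarrow> 'n cvec" and s :: "'n cvec \<Rightarrow> 'n cvec"
  assumes antiholo_invol: "antiholo_invol br s"
begin

lemma conj_linear: "s (a *s x + y) = cnj a *s s x + s y"
  and bracket: "s (br x y) = br (s x) (s y)"
  and involutive [simp]: "s (s x) = x"
  using antiholo_invol unfolding antiholo_invol_def by blast+

lemma add: "s (x + y) = s x + s y"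
  using conj_linear[of 1 x y] by simp

lemma zero [simp]: "s 0 = 0"
  using add[of 0 0] by simp

lemma smult: "s (a *s x) = cnj a *s s x"
  using conj_linear[of a x 0] by simp

lemma scaleR: "s (r *\<^sub>R x) = r *\<^sub>R s x"
  by (simp add: scaleR_eq_of_real_smult smult)

lemma minus: "s (- x) = - s x"
  using smult[of "-1" x] by simp

lemma diff: "s (x - y) = s x - s y"
  using add[of x "- y"] by (simp add: minus)

lemma eq_0_iff: "s x = 0 \<longleftrightarrow> x = 0"
  by (metis zero involutive)

lemma linear: "linear s"
  by (rule linearI) (simp_all add: add scaleR)

lemma subspace_fixed_set: "subspace (fixed_set s)"
  unfolding subspace_def fixed_set_def by (simp add: add scaleR)

lemma subspace_minus_set: "subspace (minus_set s)"
  unfolding subspace_def minus_set_def by (simp add: add scaleR)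

end

locale lie_algebra =
  fixes br :: "'n::finite cvec \<Rightarrow> 'n cvec \<Rightarrow> 'n cvec"
  assumes lie_bracket: "lie_bracket br"
begin

lemma bracket_linear_left: "br (a *s x + y) z = a *s br x z + br y z"
  and bracket_linear_right: "br z (a *s x + y) = a *s br z x + br z y"
  and bracket_self [simp]: "br x x = 0"
  and jacobi: "br x (br y z) + br y (br z x) + br z (br x y) = 0"
  using lie_bracket unfolding lie_bracket_def by blast+

lemma bracket_add_left: "br (x + y) z = br x z + br y z"
  using bracket_linear_left[of 1 x y z] by simp

lemma bracket_add_right: "br z (x + y) = br z x + br z y"
  using bracket_linear_right[of z 1 x y] by simp

lemma bracket_smult_left: "br (a *s x) z = a *s br x z"
  using bracket_linear_left[of a x 0 z] bracket_add_left[of 0 0 z] by simp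

lemma bracket_smult_right: "br z (a *s x) = a *s br z x"
  using bracket_linear_right[of z a x 0] bracket_add_right[of z 0 0] by simp

lemma bracket_scaleR_left: "br (r *\<^sub>R x) z = r *\<^sub>R br x z"
  by (simp add: scaleR_eq_of_real_smult bracket_smult_left)

lemma bracket_scaleR_right: "br z (r *\<^sub>R x) = r *\<^sub>R br z x"
  by (simp add: scaleR_eq_of_real_smult bracket_smult_right)

lemma bracket_zero_left [simp]: "br 0 z = 0"
  using bracket_scaleR_left[of 0 0 z] by simp

lemma bracket_zero_right [simp]: "br z 0 = 0"
  using bracket_scaleR_right[of z 0 0] by simp

lemma bracket_minus_left: "br (- x) z = - br x z"
  using bracket_scaleR_left[of "-1" x z] by simp

lemma bracket_minus_right: "br z (- x) = - br z x"
  using bracket_scaleR_right[of z "-1" x] by simp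

lemma bracket_diff_right: "br z (x - y) = br z x - br z y"
  using bracket_add_right[of z x "- y"] by (simp add: bracket_minus_right)

lemma bracket_antisym: "br x y = - br y x"
  using bracket_self[of "x + y"] unfolding bracket_add_left bracket_add_right
  by (simp add: eq_neg_iff_add_eq_0 add.commute)

lemma bracket_bracket_left: "br (br x y) z = br x (br y z) - br y (br x z)"
  using jacobi[of x y z] bracket_antisym[of z "br x y"] bracket_antisym[of z x]
  by (simp add: bracket_minus_right algebra_simps eq_neg_iff_add_eq_0)

lemma bilinear_bracket: "bilinear br"
  unfolding bilinear_def
  by (auto intro!: linearI simp: bracket_add_left bracket_add_right bracket_scaleR_left
      bracket_scaleR_right)

lemma abelian_span: "abelian br S \<Longrightarrow> abelian br (span S)"
  unfolding abelian_def
  using bilinear_eq[OF bilinear_bracket, of "\<lambda>_ _. 0" "span S" S "span S" S]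
  by (simp add: bilinear_def linear_zero)

lemma bracket_component: "br x v $ i = (\<Sum>k\<in>UNIV. v $ k * br x (axis k 1) $ i)"
proof -
  have "Vector_Spaces.linear (*s) (*s) (br x)"
    unfolding Vector_Spaces.linear_iff using vec.vector_space_axioms
    by (simp add: bracket_add_right bracket_smult_right)
  then have "br x (\<Sum>k\<in>UNIV. v $ k *s axis k 1) = (\<Sum>k\<in>UNIV. v $ k *s br x (axis k 1))"
    by (simp add: vec.linear_sum vec.linear_scale)
  then show ?thesis by (simp add: basis_expansion sum_component)
qed

lemma ad_mat_bracket: "ad_mat br (br x y) = ad_mat br x ** ad_mat br y - ad_mat br y ** ad_mat br x"
proof -
  have "br (br x y) (axis j 1) $ i = (\<Sum>k\<in>UNIV. br x (axis k 1) $ i * br y (axis j 1) $ k)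
      - (\<Sum>k\<in>UNIV. br y (axis k 1) $ i * br x (axis j 1) $ k)" for i j
    by (simp add: bracket_bracket_left bracket_component[of x "br y (axis j 1)"]
        bracket_component[of y "br x (axis j 1)"] mult.commute)
  then show ?thesis by (simp add: vec_eq_iff ad_mat_def matrix_matrix_mult_def)
qed

lemma killing_eq_sum: "killing br x y = (\<Sum>i\<in>UNIV. \<Sum>k\<in>UNIV. br x (axis k 1) $ i * br y (axis i 1) $ k)"
  by (simp add: killing_def matrix_matrix_mult_def ad_mat_def)

lemma killing_add_left: "killing br (x + y) z = killing br x z + killing br y z"
  and killing_add_right: "killing br z (x + y) = killing br z x + killing br z y"
  by (simp_all add: killing_eq_sum bracket_add_left sum.distrib algebra_simps)

lemma killing_scaleR_left: "killing br (r *\<^sub>R x) z = of_real r * killing br x z"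
  and killing_scaleR_right: "killing br z (r *\<^sub>R x) = of_real r * killing br z x"
  by (simp_all add: killing_eq_sum bracket_smult_left scaleR_eq_of_real_smult sum_distrib_left
      algebra_simps)

lemma killing_minus_right: "killing br z (- x) = - killing br z x"
  by (simp add: killing_eq_sum bracket_minus_left sum_negf)

text \<open>Invariance of the Killing form, from ad [h, x] = [ad h, ad x] and the cyclicity of the trace.\<close>

lemma killing_bracket_left: "killing br (br h x) z = - killing br x (br h z)"
proof -
  have "trace ((ad_mat br h ** ad_mat br x) ** ad_mat br z)
      = trace ((ad_mat br x ** ad_mat br z) ** ad_mat br h)"
    by (metis matrix_mul_assoc trace_mul_sym)
  then show ?thesis
    unfolding killing_def trace_def[symmetric] ad_mat_bracket
    by (simp add: matrix_diff_rdistrib matrix_diff_ldistrib trace_sub matrix_mul_assoc)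
qed

end

lemma subspace_set_sum: "subspace A \<Longrightarrow> subspace B \<Longrightarrow> subspace (set_sum A B)"
  unfolding set_sum_def by (rule subspace_sums)

lemma set_sum_memI: "x \<in> A \<Longrightarrow> y \<in> B \<Longrightarrow> x + y \<in> set_sum A B"
  unfolding set_sum_def by blast

lemma proj_along_eqI:
  assumes "subspace K" "subspace U" "K \<inter> U \<subseteq> {0}" "k \<in> K" "X - k \<in> U"
  shows "proj_along K U X = k"
  unfolding proj_along_def
proof (rule the_equality)
  show "k \<in> K \<and> X - k \<in> U" using assms by blast
next
  fix k' assume k': "k' \<in> K \<and> X - k' \<in> U"
  have "k' - k \<in> K" using assms k' by (simp add: subspace_diff)
  moreover have "k' - k = (X - k) - (X - k')" by simp
  then have "k' - k \<in> U" using assms k' by (metis subspace_diff)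
  ultimately show "k' = k" using assms(3) by auto
qed

definition opposite_free :: "'a set \<Rightarrow> ('a \<Rightarrow> real) set \<Rightarrow> bool" where
  "opposite_free A Ps \<longleftrightarrow> (\<forall>l\<in>Ps. \<forall>l'\<in>Ps. \<exists>H\<in>A. l H \<noteq> - l' H)"

lemma opposite_free_nonzero: "opposite_free A Ps \<Longrightarrow> l \<in> Ps \<Longrightarrow> \<exists>H\<in>A. l H \<noteq> 0"
  unfolding opposite_free_def by force

lemma root_space_bracket: "Y \<in> root_space br L A l \<Longrightarrow> H \<in> A \<Longrightarrow> br H Y = l H *\<^sub>R Y"
  unfolding root_space_def by (simp add: scaleR_eq_of_real_smult)

locale cartan_setting = lie_algebra br + theta: antiholo_involution br \<theta>
  for br :: "'n::finite cvec \<Rightarrow> 'n cvec \<Rightarrow> 'n cvec" and \<theta> +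
  assumes killing_theta_neg: "x \<noteq> 0 \<Longrightarrow> Re (killing br x (\<theta> x)) < 0"
begin

definition B\<^sub>\<theta> :: "'n cvec \<Rightarrow> 'n cvec \<Rightarrow> real" where
  "B\<^sub>\<theta> x y = - Re (killing br x (\<theta> y))"

sublocale pos_def_form B\<^sub>\<theta>
proof
  show "bilinear B\<^sub>\<theta>"
    unfolding bilinear_def B\<^sub>\<theta>_def
    by (auto intro!: linearI simp: theta.add theta.scaleR killing_add_left killing_add_right
        killing_scaleR_left killing_scaleR_right)
  show "x \<noteq> 0 \<Longrightarrow> B\<^sub>\<theta> x x > 0" for x
    using killing_theta_neg[of x] by (simp add: B\<^sub>\<theta>_def)
qed

lemma B_theta_bracket:
  assumes "H \<in> minus_set \<theta>"
  shows "B\<^sub>\<theta> (br H x) y = B\<^sub>\<theta> x (br H y)"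
proof -
  have "br H (\<theta> y) = - \<theta> (br H y)"
    using assms by (simp add: minus_set_def theta.bracket bracket_minus_left)
  then show ?thesis by (simp add: B\<^sub>\<theta>_def killing_bracket_left killing_minus_right)
qed

lemma B_theta_eigenvectors_orthogonal:
  assumes "H \<in> minus_set \<theta>" "br H x = a *\<^sub>R x" "br H y = b *\<^sub>R y" "a \<noteq> b"
  shows "B\<^sub>\<theta> x y = 0"
proof -
  have "a * B\<^sub>\<theta> x y = b * B\<^sub>\<theta> x y"
    using B_theta_bracket[OF assms(1), of x y] assms(2,3) by (simp add: bilinear_simps)
  then show ?thesis using assms(4) by simp
qed

lemma theta_root_space:
  assumes "A \<subseteq> minus_set \<theta>" "Y \<in> root_space br L A l" "H \<in> A"
  shows "br H (\<theta> Y) = (- l H) *\<^sub>R \<theta> Y"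
proof -
  have "br H (\<theta> Y) = \<theta> (br (\<theta> H) Y)" by (simp add: theta.bracket)
  also have "\<dots> = \<theta> (- (l H *\<^sub>R Y))"
    using assms root_space_bracket[OF assms(2,3)] by (auto simp: minus_set_def bracket_minus_left)
  finally show ?thesis by (simp add: theta.minus theta.scaleR)
qed

lemma neg_root:
  assumes "A \<subseteq> minus_set \<theta>" "\<alpha> \<in> roots br UNIV A"
  shows "(\<lambda>H. - \<alpha> H) \<in> roots br UNIV A"
proof -
  obtain Y where Y: "Y \<in> root_space br UNIV A \<alpha>" "Y \<noteq> 0"
    using assms(2) unfolding roots_def root_space_def by auto
  have "\<theta> Y \<in> root_space br UNIV A (\<lambda>H. - \<alpha> H)"
    using theta_root_space[OF assms(1) Y(1)] by (simp add: root_space_def scaleR_eq_of_real_smult)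
  moreover have "\<theta> Y \<noteq> 0" using Y(2) theta.eq_0_iff by blast
  ultimately show ?thesis using assms(2) unfolding roots_def by auto
qed

context
  fixes A :: "'n cvec set" and Ps :: "('n cvec \<Rightarrow> real) set" and L :: "'n cvec set"
  assumes A_minus: "A \<subseteq> minus_set \<theta>" and A_abelian: "abelian br A"
    and Ps: "opposite_free A Ps"
begin

lemma nilp_orthogonal:
  assumes "h \<in> A" "m \<in> nilp br L A Ps"
  shows "B\<^sub>\<theta> h m = 0" and "B\<^sub>\<theta> h (\<theta> m) = 0"
proof -
  have gen: "B\<^sub>\<theta> h Y = 0 \<and> B\<^sub>\<theta> h (\<theta> Y) = 0" if Y: "l \<in> Ps" "Y \<in> root_space br L A l" for l Y
  proof -
    obtain H where H: "H \<in> A" "l H \<noteq> 0" using opposite_free_nonzero[OF Ps Y(1)] by blast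
    then have "H \<in> minus_set \<theta>" using A_minus by blast
    have "br H h = 0 *\<^sub>R h" using A_abelian H(1) \<open>h \<in> A\<close> unfolding abelian_def by simp
    have "B\<^sub>\<theta> h Y = 0"
      by (rule B_theta_eigenvectors_orthogonal[OF \<open>H \<in> minus_set \<theta>\<close> \<open>br H h = 0 *\<^sub>R h\<close>
            root_space_bracket[OF Y(2) H(1)]]) (use H(2) in simp)
    moreover have "B\<^sub>\<theta> h (\<theta> Y) = 0"
      by (rule B_theta_eigenvectors_orthogonal[OF \<open>H \<in> minus_set \<theta>\<close> \<open>br H h = 0 *\<^sub>R h\<close>
            theta_root_space[OF A_minus Y(2) H(1)]]) (use H(2) in simp)
    ultimately show ?thesis ..
  qed
  have lin: "linear (B\<^sub>\<theta> h)" "linear (\<lambda>m. B\<^sub>\<theta> h (\<theta> m))"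
    using linear_right linear_compose[OF theta.linear linear_right] by (simp_all add: o_def)
  have m: "m \<in> span (\<Union>l\<in>Ps. root_space br L A l)" using assms(2) unfolding nilp_def .
  show "B\<^sub>\<theta> h m = 0"
    by (rule linear_eq_0_on_span[OF lin(1) _ m]) (use gen in blast)
  have "(\<lambda>m. B\<^sub>\<theta> h (\<theta> m)) m = 0"
    by (rule linear_eq_0_on_span[OF lin(2) _ m]) (use gen in auto)
  then show "B\<^sub>\<theta> h (\<theta> m) = 0" by simp
qed

lemma nilp_theta_orthogonal:
  assumes "m \<in> nilp br L A Ps" "m' \<in> nilp br L A Ps"
  shows "B\<^sub>\<theta> m (\<theta> m') = 0"
proof -
  define G where "G = (\<Union>l\<in>Ps. root_space br L A l)"
  have bil: "bilinear (\<lambda>x y. B\<^sub>\<theta> x (\<theta> y))"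
    using bilinear theta.linear unfolding bilinear_def by (auto intro: linear_compose[unfolded o_def])
  have bil0: "bilinear (\<lambda>_ _. 0::real)" by (simp add: bilinear_def linear_zero)
  have gen: "B\<^sub>\<theta> Y (\<theta> Y') = 0" if YY': "Y \<in> G" "Y' \<in> G" for Y Y'
  proof -
    obtain l l' where Y: "l \<in> Ps" "Y \<in> root_space br L A l"
      and Y': "l' \<in> Ps" "Y' \<in> root_space br L A l'"
      using YY' unfolding G_def by blast
    obtain H where H: "H \<in> A" "l H \<noteq> - l' H"
      using Ps Y(1) Y'(1) unfolding opposite_free_def by blast
    then have "H \<in> minus_set \<theta>" using A_minus by blast
    from B_theta_eigenvectors_orthogonal[OF this root_space_bracket[OF Y(2) H(1)]
        theta_root_space[OF A_minus Y'(2) H(1)] H(2)]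
    show ?thesis .
  qed
  have "nilp br L A Ps \<subseteq> span G" unfolding nilp_def G_def by simp
  from bilinear_eq[OF bil bil0 this this assms gen] show ?thesis .
qed

lemma fixed_set_inter_set_sum_nilp: "fixed_set \<theta> \<inter> set_sum A (nilp br L A Ps) \<subseteq> {0}"
proof -
  have "h + m = 0" if "h \<in> A" "m \<in> nilp br L A Ps" "\<theta> (h + m) = h + m" for h m
  proof -
    have "\<theta> h = - h" using A_minus \<open>h \<in> A\<close> unfolding minus_set_def by blast
    then have "(2::real) *\<^sub>R h = \<theta> m - m" using that(3) by (simp add: theta.add algebra_simps scaleR_2)
    then have "2 * B\<^sub>\<theta> h h = B\<^sub>\<theta> h (\<theta> m) - B\<^sub>\<theta> h m"
      by (metis bilinear_rmul[OF bilinear] bilinear_rsub[OF bilinear] real_scaleR_def)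
    then have "h = 0" using nilp_orthogonal[OF that(1,2)] self_eq_0_iff by simp
    then have "B\<^sub>\<theta> m m = 0" using that(3) nilp_theta_orthogonal[OF that(2,2)] by simp
    then show ?thesis using \<open>h = 0\<close> self_eq_0_iff by simp
  qed
  then show ?thesis unfolding set_sum_def fixed_set_def by force
qed

lemma inter_nilp_eq_0: "h \<in> A \<Longrightarrow> h \<in> nilp br L A Ps \<Longrightarrow> h = 0"
  using nilp_orthogonal(1)[of h h] self_eq_0_iff by simp

end

end

locale iwasawa_setting = cartan_setting br \<theta>
  for br :: "'n::finite cvec \<Rightarrow> 'n cvec \<Rightarrow> 'n cvec" and \<theta> +
  fixes \<aa> :: "'n cvec set"
  assumes a_max: "max_abelian_in br \<aa> (minus_set \<theta>)"
begin

lemma a_subspace: "subspace \<aa>"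
  and a_minus: "\<aa> \<subseteq> minus_set \<theta>"
  and a_abelian: "abelian br \<aa>"
  using a_max unfolding max_abelian_in_def by blast+

lemma a_bracket: "H \<in> \<aa> \<Longrightarrow> H' \<in> \<aa> \<Longrightarrow> br H H' = 0"
  using a_abelian unfolding abelian_def by blast

sublocale ad: commuting_selfadjoint_family B\<^sub>\<theta> \<aa> br
proof unfold_locales
  fix H H' x y r assume H: "H \<in> \<aa>"
  show "br H (x + y) = br H x + br H y" by (rule bracket_add_right)
  show "br H (r *\<^sub>R x) = r *\<^sub>R br H x" by (rule bracket_scaleR_right)
  show "B\<^sub>\<theta> (br H x) y = B\<^sub>\<theta> x (br H y)" using B_theta_bracket a_minus H by blast
  assume "H' \<in> \<aa>"
  then show "br H (br H' x) = br H' (br H x)"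
    using bracket_bracket_left[of H H' x] a_bracket H by simp
qed

text \<open>Maximality of \<aa>: the \<theta>-anti-invariant part of a vector of weight zero
  commutes with \<aa>, so it must lie in \<aa>.\<close>

lemma zero_weight_minus_part:
  assumes "\<And>H. H \<in> \<aa> \<Longrightarrow> br H X = 0"
  shows "X - \<theta> X \<in> \<aa>"
proof -
  define h where "h = X - \<theta> X"
  have "\<theta> h = - h" unfolding h_def by (simp add: theta.diff)
  have "br H h = 0" if "H \<in> \<aa>" for H
  proof -
    have "br H (\<theta> X) = \<theta> (br (\<theta> H) X)" by (simp add: theta.bracket)
    also have "\<dots> = 0"
      using assms that a_minus by (auto simp: minus_set_def bracket_minus_left)
    finally show ?thesis unfolding h_def using assms[OF that] by (simp add: bracket_diff_right)
  qed
  then have "abelian br (insert h \<aa>)"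
    using a_abelian bracket_antisym[of h] unfolding abelian_def by (auto simp: neg_equal_0_iff_equal)
  then have "abelian br (span (insert h \<aa>))" by (rule abelian_span)
  moreover have "span (insert h \<aa>) \<subseteq> minus_set \<theta>"
    using a_minus \<open>\<theta> h = - h\<close> theta.subspace_minus_set
    by (intro span_minimal) (auto simp: minus_set_def)
  moreover have "\<aa> \<subseteq> span (insert h \<aa>)" by (meson span_superset subset_insertI subset_trans)
  ultimately have "span (insert h \<aa>) = \<aa>"
    using a_max subspace_span unfolding max_abelian_in_def by blast
  then show ?thesis unfolding h_def by (metis insert_subset span_superset)
qed

lemma root_ordering_opposite_free:
  assumes "root_ordering br \<aa> Pos"
  shows "opposite_free \<aa> Pos"
proof -
  obtain H0 where "H0 \<in> \<aa>" "Pos = {\<alpha>\<in>roots br UNIV \<aa>. \<alpha> H0 > 0}"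
    using assms unfolding root_ordering_def by blast
  then show ?thesis
    unfolding opposite_free_def by (intro ballI bexI[of _ H0]) auto
qed

lemma common_eigenvector_mem_iwasawa_sum:
  assumes ord: "root_ordering br \<aa> Pos" and X: "X \<in> ad.common_eigenvectors"
  shows "X \<in> set_sum (fixed_set \<theta>) (set_sum \<aa> (nilp br UNIV \<aa> Pos))"
proof -
  let ?n = "nilp br UNIV \<aa> Pos"
  have mem: "k + (h + m) \<in> set_sum (fixed_set \<theta>) (set_sum \<aa> ?n)"
    if "k \<in> fixed_set \<theta>" "h \<in> \<aa>" "m \<in> ?n" for k h m
    using that by (intro set_sum_memI)
  have "subspace ?n" unfolding nilp_def by (rule subspace_span)
  have zero: "0 \<in> fixed_set \<theta>" "0 \<in> \<aa>" "0 \<in> ?n"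
    using subspace_0[OF a_subspace] subspace_0[OF \<open>subspace ?n\<close>] by (simp_all add: fixed_set_def)
  obtain H0 where H0: "\<forall>\<alpha>\<in>roots br UNIV \<aa>. \<alpha> H0 \<noteq> 0" "Pos = {\<alpha>\<in>roots br UNIV \<aa>. \<alpha> H0 > 0}"
    using ord unfolding root_ordering_def by blast
  have "\<forall>H\<in>\<aa>. \<exists>l. br H X = l *\<^sub>R X" using X unfolding ad.common_eigenvectors_def by blast
  then obtain f where f: "\<forall>H\<in>\<aa>. br H X = f H *\<^sub>R X" by metis
  define \<alpha> where "\<alpha> H = (if H \<in> \<aa> then f H else 0)" for H
  have X_root: "X \<in> root_space br UNIV \<aa> \<alpha>"
    unfolding root_space_def \<alpha>_def using f by (simp add: scaleR_eq_of_real_smult)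
  consider "X = 0" | "\<forall>H\<in>\<aa>. f H = 0" | "X \<noteq> 0" "\<exists>H\<in>\<aa>. f H \<noteq> 0" by blast
  then show ?thesis
  proof cases
    case 1
    then show ?thesis using mem[OF zero] by simp
  next
    case 2
    then have "X - \<theta> X \<in> \<aa>" using f by (intro zero_weight_minus_part) auto
    then have "(1/2::real) *\<^sub>R (X - \<theta> X) \<in> \<aa>" using a_subspace by (simp add: subspace_scale)
    moreover have "(1/2::real) *\<^sub>R (X + \<theta> X) \<in> fixed_set \<theta>"
      unfolding fixed_set_def by (simp add: theta.scaleR theta.add add.commute)
    moreover have "X = (1/2::real) *\<^sub>R (X + \<theta> X) + ((1/2::real) *\<^sub>R (X - \<theta> X) + 0)"
      by (simp add: algebra_simps flip: scaleR_2)
    ultimately show ?thesis using mem zero(3) by metis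
  next
    case 3
    then have "\<alpha> \<in> roots br UNIV \<aa>"
      unfolding roots_def using X_root by (auto simp: \<alpha>_def)
    show ?thesis
    proof (cases "\<alpha> H0 > 0")
      case True
      then have "\<alpha> \<in> Pos" using H0(2) \<open>\<alpha> \<in> roots br UNIV \<aa>\<close> by blast
      then have "X \<in> ?n" using X_root unfolding nilp_def by (blast intro: span_base)
      then show ?thesis using mem[OF zero(1,2)] by simp
    next
      case False
      then have "(\<lambda>H. - \<alpha> H) \<in> Pos"
        using H0 neg_root[OF a_minus \<open>\<alpha> \<in> roots br UNIV \<aa>\<close>] \<open>\<alpha> \<in> roots br UNIV \<aa>\<close>
        by (auto simp: less_le)
      moreover have "\<theta> X \<in> root_space br UNIV \<aa> (\<lambda>H. - \<alpha> H)"
        using theta_root_space[OF a_minus X_root] by (simp add: root_space_def scaleR_eq_of_real_smult)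
      ultimately have "\<theta> X \<in> ?n" unfolding nilp_def by (blast intro: span_base)
      then have "- \<theta> X \<in> ?n" by (rule subspace_neg[OF \<open>subspace ?n\<close>])
      moreover have "X + \<theta> X \<in> fixed_set \<theta>"
        unfolding fixed_set_def by (simp add: theta.add add.commute)
      ultimately show ?thesis using mem[OF _ zero(2)] by force
    qed
  qed
qed

theorem iwasawa_decomposition:
  assumes "root_ordering br \<aa> Pos"
  shows "set_sum (fixed_set \<theta>) (set_sum \<aa> (nilp br UNIV \<aa> Pos)) = UNIV"
proof -
  have "subspace (set_sum (fixed_set \<theta>) (set_sum \<aa> (nilp br UNIV \<aa> Pos)))"
    by (intro subspace_set_sum theta.subspace_fixed_set a_subspace) (simp add: nilp_def)
  then show ?thesis
    using span_minimal[OF subsetI[OF common_eigenvector_mem_iwasawa_sum[OF assms]]]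
      ad.span_common_eigenvectors by blast
qed

end

locale compatible_real_form = iwasawa_setting br \<theta> \<aa> + tau: antiholo_involution br \<tau>
  for br :: "'n::finite cvec \<Rightarrow> 'n cvec \<Rightarrow> 'n cvec" and \<theta> \<aa> \<tau> +
  fixes Pos :: "('n cvec \<Rightarrow> real) set"
  assumes root_ordering: "root_ordering br \<aa> Pos"
    and tau_theta_commute: "\<tau> (\<theta> x) = \<theta> (\<tau> x)"
    and tau_vec_span: "\<tau> ` vec.span \<aa> \<subseteq> vec.span \<aa>"
    and same_sign: "\<alpha> \<in> roots br UNIV \<aa> \<Longrightarrow> \<beta> \<in> roots br UNIV \<aa> \<Longrightarrow>
      (\<forall>H\<in>\<aa> \<inter> fixed_set \<tau>. \<alpha> H = \<beta> H) \<Longrightarrow> \<alpha> \<in> Pos \<longleftrightarrow> \<beta> \<in> Pos"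
begin

abbreviation "\<aa>\<^sub>0 \<equiv> \<aa> \<inter> fixed_set \<tau>"

definition Pos\<^sub>0 :: "('n cvec \<Rightarrow> real) set" where
  "Pos\<^sub>0 = {l \<in> roots br (fixed_set \<tau>) \<aa>\<^sub>0. \<exists>\<alpha>\<in>Pos. \<forall>H\<in>\<aa>\<^sub>0. \<alpha> H = l H}"

lemma tau_a: "H \<in> \<aa> \<Longrightarrow> \<tau> H \<in> \<aa>"
proof -
  assume "H \<in> \<aa>"
  then have "\<tau> H \<in> vec.span \<aa>" using tau_vec_span vec.span_base by blast
  then obtain h1 h2 where h: "h1 \<in> \<aa>" "h2 \<in> \<aa>" "\<tau> H = h1 + \<i> *s h2"
    using vec_span_real_imag_decomp[OF a_subspace] by blast
  have "\<theta> (\<tau> H) = - \<tau> H"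
    using \<open>H \<in> \<aa>\<close> a_minus by (auto simp: minus_set_def tau_theta_commute[symmetric] tau.minus)
  moreover have "\<theta> h1 = - h1" "\<theta> h2 = - h2" using h a_minus unfolding minus_set_def by auto
  then have "\<theta> (\<tau> H) = - h1 + \<i> *s h2" using h(3) by (simp add: theta.add theta.smult)
  ultimately have "h2 = 0" using h(3) by (simp add: vec_eq_iff)
  then show "\<tau> H \<in> \<aa>" using h by simp
qed

lemma tau_root:
  assumes "\<alpha> \<in> roots br UNIV \<aa>"
  defines "\<beta> \<equiv> \<lambda>H. if H \<in> \<aa> then \<alpha> (\<tau> H) else 0"
  shows tau_root_space: "Y \<in> root_space br UNIV \<aa> \<alpha> \<Longrightarrow> \<tau> Y \<in> root_space br UNIV \<aa> \<beta>"
    and tau_root_positive: "\<beta> \<in> Pos \<longleftrightarrow> \<alpha> \<in> Pos"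
proof -
  show Y: "\<tau> Y \<in> root_space br UNIV \<aa> \<beta>" if "Y \<in> root_space br UNIV \<aa> \<alpha>" for Y
  proof -
    have "br H (\<tau> Y) = complex_of_real (\<beta> H) *s \<tau> Y" if "H \<in> \<aa>" for H
    proof -
      have "br H (\<tau> Y) = \<tau> (br (\<tau> H) Y)" by (simp add: tau.bracket)
      then show ?thesis
        using \<open>Y \<in> root_space br UNIV \<aa> \<alpha>\<close> tau_a[OF \<open>H \<in> \<aa>\<close>] \<open>H \<in> \<aa>\<close>
        by (simp add: root_space_def \<beta>_def tau.smult)
    qed
    then show ?thesis by (simp add: root_space_def)
  qed
  obtain Y where "Y \<in> root_space br UNIV \<aa> \<alpha>" "Y \<noteq> 0"
    using assms(1) unfolding roots_def root_space_def by auto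
  then have "root_space br UNIV \<aa> \<beta> \<noteq> {0}" using Y tau.eq_0_iff by blast
  moreover obtain H where "H \<in> \<aa>" "\<alpha> H \<noteq> 0" using assms(1) unfolding roots_def by blast
  then have "\<exists>H\<in>\<aa>. \<beta> H \<noteq> 0" using tau_a by (intro bexI[of _ "\<tau> H"]) (auto simp: \<beta>_def)
  ultimately have "\<beta> \<in> roots br UNIV \<aa>" unfolding roots_def \<beta>_def by auto
  moreover have "\<forall>H\<in>\<aa>\<^sub>0. \<beta> H = \<alpha> H" by (simp add: \<beta>_def fixed_set_def)
  ultimately show "\<beta> \<in> Pos \<longleftrightarrow> \<alpha> \<in> Pos" using same_sign assms(1) by blast
qed

lemma tau_nilp: "m \<in> nilp br UNIV \<aa> Pos \<Longrightarrow> \<tau> m \<in> nilp br UNIV \<aa> Pos"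
proof -
  let ?G = "\<Union>\<alpha>\<in>Pos. root_space br UNIV \<aa> \<alpha>"
  have "\<tau> ` ?G \<subseteq> span ?G"
    using tau_root_space tau_root_positive root_ordering
    unfolding root_ordering_def by (blast intro: span_base)
  then have "span (\<tau> ` ?G) \<subseteq> span ?G" by (rule span_minimal[OF _ subspace_span])
  then have "\<tau> ` span ?G \<subseteq> span ?G" by (simp add: linear_span_image[OF tau.linear])
  then show "m \<in> nilp br UNIV \<aa> Pos \<Longrightarrow> \<tau> m \<in> nilp br UNIV \<aa> Pos"
    unfolding nilp_def by blast
qed

lemma Pos_roots: "\<alpha> \<in> Pos \<Longrightarrow> \<alpha> \<in> roots br UNIV \<aa>"
  using root_ordering unfolding root_ordering_def by blast

lemma opposite_free_Pos: "opposite_free \<aa> Pos"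
  by (rule root_ordering_opposite_free[OF root_ordering])

lemma neg_positive_root_not_positive: "\<alpha> \<in> Pos \<Longrightarrow> (\<lambda>H. - \<alpha> H) \<notin> Pos"
  using opposite_free_Pos unfolding opposite_free_def by fastforce

lemma positive_root_nonzero_on_a0:
  assumes "\<alpha> \<in> Pos"
  shows "\<exists>H\<in>\<aa>\<^sub>0. \<alpha> H \<noteq> 0"
proof (rule ccontr)
  assume "\<not> ?thesis"
  then have "\<forall>H\<in>\<aa>\<^sub>0. \<alpha> H = - \<alpha> H" by simp
  then have "(\<lambda>H. - \<alpha> H) \<in> Pos"
    using same_sign[OF Pos_roots[OF assms] neg_root[OF a_minus Pos_roots[OF assms]]] assms by blast
  then show False using neg_positive_root_not_positive[OF assms] by blast
qed

lemma opposite_free_Pos\<^sub>0: "opposite_free \<aa>\<^sub>0 Pos\<^sub>0"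
  unfolding opposite_free_def
proof (intro ballI)
  fix l l' assume "l \<in> Pos\<^sub>0" "l' \<in> Pos\<^sub>0"
  then obtain \<alpha> \<alpha>' where "\<alpha> \<in> Pos" "\<forall>H\<in>\<aa>\<^sub>0. \<alpha> H = l H" "\<alpha>' \<in> Pos" "\<forall>H\<in>\<aa>\<^sub>0. \<alpha>' H = l' H"
    unfolding Pos\<^sub>0_def by blast
  show "\<exists>H\<in>\<aa>\<^sub>0. l H \<noteq> - l' H"
  proof (rule ccontr)
    assume "\<not> ?thesis"
    then have "(\<lambda>H. - \<alpha>' H) \<in> Pos"
      using same_sign[OF Pos_roots[OF \<open>\<alpha> \<in> Pos\<close>] neg_root[OF a_minus Pos_roots[OF \<open>\<alpha>' \<in> Pos\<close>]]]
        \<open>\<alpha> \<in> Pos\<close> \<open>\<forall>H\<in>\<aa>\<^sub>0. \<alpha> H = l H\<close> \<open>\<forall>H\<in>\<aa>\<^sub>0. \<alpha>' H = l' H\<close> by auto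
    then show False using neg_positive_root_not_positive[OF \<open>\<alpha>' \<in> Pos\<close>] by blast
  qed
qed

lemma nilp_tau_sum: "m \<in> nilp br UNIV \<aa> Pos \<Longrightarrow> m + \<tau> m \<in> nilp br (fixed_set \<tau>) \<aa>\<^sub>0 Pos\<^sub>0"
proof -
  let ?G = "\<Union>\<alpha>\<in>Pos. root_space br UNIV \<aa> \<alpha>"
  let ?S = "\<lambda>m. m + \<tau> m"
  have "?S Y \<in> nilp br (fixed_set \<tau>) \<aa>\<^sub>0 Pos\<^sub>0" if "\<alpha> \<in> Pos" "Y \<in> root_space br UNIV \<aa> \<alpha>" for \<alpha> Y
  proof -
    define l where "l H = (if H \<in> \<aa>\<^sub>0 then \<alpha> H else 0)" for H
    have "?S Y \<in> root_space br (fixed_set \<tau>) \<aa>\<^sub>0 l"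
    proof -
      have "br H (\<tau> Y) = complex_of_real (\<alpha> H) *s \<tau> Y" if "H \<in> \<aa>\<^sub>0" for H
      proof -
        have "br H (\<tau> Y) = \<tau> (br (\<tau> H) Y)" by (simp add: tau.bracket)
        also have "\<dots> = \<tau> (complex_of_real (\<alpha> H) *s Y)"
          using that \<open>Y \<in> root_space br UNIV \<aa> \<alpha>\<close> by (simp add: fixed_set_def root_space_def)
        finally show ?thesis by (simp add: tau.smult)
      qed
      then show ?thesis
        using \<open>Y \<in> root_space br UNIV \<aa> \<alpha>\<close>
        by (simp add: root_space_def l_def fixed_set_def tau.add add.commute bracket_add_right
            vector_add_ldistrib)
    qed
    moreover have "l \<in> Pos\<^sub>0" if "?S Y \<noteq> 0"
      unfolding Pos\<^sub>0_def roots_def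
      using positive_root_nonzero_on_a0[OF \<open>\<alpha> \<in> Pos\<close>] \<open>\<alpha> \<in> Pos\<close> calculation that
      by (auto simp: l_def)
    ultimately show ?thesis
      unfolding nilp_def by (metis UN_I span_base span_zero)
  qed
  then have "?S ` ?G \<subseteq> nilp br (fixed_set \<tau>) \<aa>\<^sub>0 Pos\<^sub>0" by blast
  then have "span (?S ` ?G) \<subseteq> nilp br (fixed_set \<tau>) \<aa>\<^sub>0 Pos\<^sub>0"
    unfolding nilp_def by (rule span_minimal[OF _ subspace_span])
  moreover have "linear ?S" by (intro linear_compose_add linear_ident tau.linear)
  ultimately have "?S ` span ?G \<subseteq> nilp br (fixed_set \<tau>) \<aa>\<^sub>0 Pos\<^sub>0"
    by (simp add: linear_span_image)
  then show "m \<in> nilp br UNIV \<aa> Pos \<Longrightarrow> ?S m \<in> nilp br (fixed_set \<tau>) \<aa>\<^sub>0 Pos\<^sub>0"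
    unfolding nilp_def by blast
qed

lemma tau_set_sum_nilp: "u \<in> set_sum \<aa> (nilp br UNIV \<aa> Pos) \<Longrightarrow> \<tau> u \<in> set_sum \<aa> (nilp br UNIV \<aa> Pos)"
  unfolding set_sum_def using tau_a tau_nilp by (force simp: tau.add)

lemma proj_along_restrict:
  assumes X: "X \<in> fixed_set \<tau>"
  shows "proj_along (fixed_set \<theta> \<inter> fixed_set \<tau>) (set_sum \<aa>\<^sub>0 (nilp br (fixed_set \<tau>) \<aa>\<^sub>0 Pos\<^sub>0)) X
    = proj_along (fixed_set \<theta>) (set_sum \<aa> (nilp br UNIV \<aa> Pos)) X"
proof -
  let ?n = "nilp br UNIV \<aa> Pos" and ?n\<^sub>0 = "nilp br (fixed_set \<tau>) \<aa>\<^sub>0 Pos\<^sub>0"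
  have "subspace ?n" "subspace ?n\<^sub>0" unfolding nilp_def by (rule subspace_span)+
  have subspaces: "subspace (fixed_set \<theta>)" "subspace (set_sum \<aa> ?n)"
    "subspace (fixed_set \<theta> \<inter> fixed_set \<tau>)" "subspace (set_sum \<aa>\<^sub>0 ?n\<^sub>0)"
    using theta.subspace_fixed_set tau.subspace_fixed_set a_subspace \<open>subspace ?n\<close> \<open>subspace ?n\<^sub>0\<close>
    by (auto intro: subspace_set_sum subspace_inter)
  have unique: "fixed_set \<theta> \<inter> set_sum \<aa> ?n \<subseteq> {0}"
    by (rule fixed_set_inter_set_sum_nilp[OF a_minus a_abelian opposite_free_Pos])
  have "fixed_set \<theta> \<inter> set_sum \<aa>\<^sub>0 ?n\<^sub>0 \<subseteq> {0}"
    using a_minus a_abelian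
    by (intro fixed_set_inter_set_sum_nilp opposite_free_Pos\<^sub>0) (auto simp: abelian_def)
  then have unique\<^sub>0: "(fixed_set \<theta> \<inter> fixed_set \<tau>) \<inter> set_sum \<aa>\<^sub>0 ?n\<^sub>0 \<subseteq> {0}" by blast
  have "X \<in> set_sum (fixed_set \<theta>) (set_sum \<aa> ?n)"
    using iwasawa_decomposition[OF root_ordering] by simp
  then obtain k where k: "k \<in> fixed_set \<theta>" "X - k \<in> set_sum \<aa> ?n"
    unfolding set_sum_def by force
  have proj: "proj_along (fixed_set \<theta>) (set_sum \<aa> ?n) X = k"
    by (rule proj_along_eqI[OF subspaces(1,2) unique k])
  have "\<tau> k \<in> fixed_set \<theta>" using k(1) by (simp add: fixed_set_def flip: tau_theta_commute)
  moreover have "X - \<tau> k \<in> set_sum \<aa> ?n"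
    using tau_set_sum_nilp[OF k(2)] X by (simp add: tau.diff fixed_set_def)
  ultimately have "proj_along (fixed_set \<theta>) (set_sum \<aa> ?n) X = \<tau> k"
    by (rule proj_along_eqI[OF subspaces(1,2) unique])
  then have "\<tau> k = k" using proj by simp
  obtain h m where hm: "h \<in> \<aa>" "m \<in> ?n" "X - k = h + m"
    using k(2) unfolding set_sum_def by blast
  have "\<tau> (X - k) = X - k" using X \<open>\<tau> k = k\<close> by (simp add: tau.diff fixed_set_def)
  then have diff_eq: "\<tau> h - h = m - \<tau> m" unfolding hm(3) by (simp add: tau.add algebra_simps)
  have "\<tau> h - h \<in> \<aa>" using hm(1) tau_a a_subspace by (simp add: subspace_diff)
  moreover have "\<tau> h - h \<in> ?n"
    unfolding diff_eq using hm(2) tau_nilp \<open>subspace ?n\<close> by (simp add: subspace_diff)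
  ultimately have "\<tau> h - h = 0"
    by (rule inter_nilp_eq_0[OF a_minus a_abelian opposite_free_Pos])
  then have "\<tau> h = h" "\<tau> m = m" using diff_eq by simp_all
  then have "h \<in> \<aa>\<^sub>0" using hm(1) by (simp add: fixed_set_def)
  moreover have "m \<in> ?n\<^sub>0"
    using subspace_scale[OF \<open>subspace ?n\<^sub>0\<close> nilp_tau_sum[OF hm(2)], of "1/2"] \<open>\<tau> m = m\<close>
    by (simp add: scaleR_2[symmetric])
  ultimately have "X - k \<in> set_sum \<aa>\<^sub>0 ?n\<^sub>0" using hm(3) by (simp add: set_sum_memI)
  moreover have "k \<in> fixed_set \<theta> \<inter> fixed_set \<tau>" using k(1) \<open>\<tau> k = k\<close> by (simp add: fixed_set_def)
  ultimately show ?thesis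
    using proj proj_along_eqI[OF subspaces(3,4) unique\<^sub>0] by simp
qed

end

theorem lemma4p1:
  fixes br :: "complex^'n::finite \<Rightarrow> complex^'n \<Rightarrow> complex^'n"
    and \<theta> \<tau> :: "complex^'n \<Rightarrow> complex^'n"
    and \<aa> :: "(complex^'n) set"
    and Pos :: "(complex^'n \<Rightarrow> real) set"
  assumes ss: "semisimple br"
    and cartan: "cartan_involution br \<theta>"
    and a_max: "max_abelian_in br \<aa> (minus_set \<theta>)"
    and ord: "root_ordering br \<aa> Pos"
    and tau: "antiholo_invol br \<tau>"
    and c: "\<And>x. \<tau> (\<theta> x) = \<theta> (\<tau> x)"
    and d1: "\<tau> ` vec.span \<aa> \<subseteq> vec.span \<aa>"
    and d2: "max_abelian_in br (\<aa> \<inter> fixed_set \<tau>) (minus_set \<theta> \<inter> fixed_set \<tau>)"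
    and e: "\<And>\<alpha> \<beta>. \<alpha> \<in> roots br UNIV \<aa> \<Longrightarrow> \<beta> \<in> roots br UNIV \<aa> \<Longrightarrow>
              (\<forall>H\<in>\<aa> \<inter> fixed_set \<tau>. \<alpha> H = \<beta> H) \<Longrightarrow> (\<alpha> \<in> Pos \<longleftrightarrow> \<beta> \<in> Pos)"
  shows "\<forall>X\<in>fixed_set \<tau>.
     toda br (fixed_set \<theta>) (set_sum \<aa> (nilp br UNIV \<aa> Pos)) X
   = toda br (fixed_set \<theta> \<inter> fixed_set \<tau>)
        (set_sum (\<aa> \<inter> fixed_set \<tau>)
           (nilp br (fixed_set \<tau>) (\<aa> \<inter> fixed_set \<tau>)
              {l \<in> roots br (fixed_set \<tau>) (\<aa> \<inter> fixed_set \<tau>).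
                 \<exists>\<alpha>\<in>Pos. \<forall>H\<in>\<aa> \<inter> fixed_set \<tau>. \<alpha> H = l H})) X"
proof -
  interpret compatible_real_form br \<theta> \<aa> \<tau> Pos
  proof unfold_locales
    show "lie_bracket br" using ss by (simp add: semisimple_def)
    show "antiholo_invol br \<theta>" "\<And>x. x \<noteq> 0 \<Longrightarrow> Re (killing br x (\<theta> x)) < 0"
      using cartan by (simp_all add: cartan_involution_def)
  qed (fact a_max ord tau c d1 e)+
  show ?thesis
    unfolding toda_def using proj_along_restrict by (simp add: Pos\<^sub>0_def)
qed

end
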